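(* Let $Q$ be any quandle and let $K$ be an oriented knot whose symmetry type is reversible, positive amphicheiral, or fully amphicheiral (i.e. not chiral and not negative amphicheiral). Then $$\mathrm{Col}_Q(rm(K))=\mathrm{Col}_Q(m(K))=\mathrm{Col}_Q(r(K))=\mathrm{Col}_Q(K).$$
   Context: A quandle is a set $X$ with a binary operation $*$ such that $a*a=a$ for all $a$; for all $b,c$ there is a unique $a$ with $a*b=c$; and $(a*b)*c=(a*c)*(b*c)$ for all $a,b,c$. A coloring of an oriented knot diagram by a quandle $X$ is a map from the set of arcs of the diagram to $X$ such that at each crossing, if the over-arc is colored $y$ and the under-arc on one side (determined by the orientation of the over-arc, under a fixed standard convention) is colored $x$, then the under-arc on the other side is colored $x*y$. Equivalently, colorings correspond bijectively to quandle homomorphisms from the fundamental quandle of the knot to $X$. $\mathrm{Col}_Q(K)$ denotes the number (cardinality) of colorings of a diagram of $K$ by $Q$; it is a knot invariant. For an oriented knot $K$, $m(K)$ is its mirror image and $r(K)$ is $K$ with orientation reversed; $K=K'$ means there is an orientation-preserving homeomorphism of $S^3$ taking $K$ to $K'$ respecting orientations. $K$ is reversible if its only symmetry is $K=r(K)$; negative amphicheiral if its only symmetry is $K=rm(K)$; positive amphicheiral if its only symmetry is $K=m(K)$; chiral if it has none of the symmetries $K=r(K)$, $K=m(K)$, $K=rm(K)$; fully amphicheiral if $K=r(K)=m(K)=rm(K)$. *)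

theory Defs
  imports "HOL-Library.Equipollence"
begin

text \<open>
  Combinatorial model of oriented knots in S^3 via closed braids (Alexander's
  theorem + Markov's theorem).  A braid on n strands is a word of nonzero
  integers; the letter a stands for sigma_|a| (a > 0) or its inverse (a < 0),
  with 1 <= |a| < n.  Strands are oriented downwards, positions 1..n left to right.
  Equality of oriented knots (orientation preserving homeomorphism of S^3
  respecting orientations) corresponds to Markov equivalence of braids.
\<close>

type_synonym braid = "nat \<times> int list"

definition valid_braid :: "braid \<Rightarrow> bool" where
  "valid_braid b \<longleftrightarrow> fst b \<ge> 1 \<and> (\<forall>a\<in>set (snd b). a \<noteq> 0 \<and> nat \<bar>a\<bar> < fst b)"

definition letter_perm :: "int \<Rightarrow> nat \<Rightarrow> nat" where
  "letter_perm a i = (let j = nat \<bar>a\<bar> in if i = j then j + 1 else if i = j + 1 then j else i)"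

fun braid_perm :: "int list \<Rightarrow> nat \<Rightarrow> nat" where
  "braid_perm [] = id"
| "braid_perm (a # w) = braid_perm w \<circ> letter_perm a"

text \<open>The closure of the braid has exactly one component, i.e. is a knot.\<close>
definition is_knot_braid :: "braid \<Rightarrow> bool" where
  "is_knot_braid b \<longleftrightarrow> valid_braid b \<and>
     (\<forall>i\<in>{1..fst b}. \<exists>m. (braid_perm (snd b) ^^ m) 1 = i)"

inductive markov_step :: "braid \<Rightarrow> braid \<Rightarrow> bool" where
  free_cancel: "valid_braid (n, u @ [a, -a] @ v) \<Longrightarrow>
     markov_step (n, u @ [a, -a] @ v) (n, u @ v)"
| far_comm: "valid_braid (n, u @ [a, b] @ v) \<Longrightarrow> a > 0 \<Longrightarrow> b > 0 \<Longrightarrow> \<bar>a - b\<bar> \<ge> 2 \<Longrightarrow>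
     markov_step (n, u @ [a, b] @ v) (n, u @ [b, a] @ v)"
| braid_rel: "valid_braid (n, u @ [a, b, a] @ v) \<Longrightarrow> a > 0 \<Longrightarrow> b > 0 \<Longrightarrow> \<bar>a - b\<bar> = 1 \<Longrightarrow>
     markov_step (n, u @ [a, b, a] @ v) (n, u @ [b, a, b] @ v)"
| conj: "valid_braid (n, a # w) \<Longrightarrow> markov_step (n, a # w) (n, w @ [a])"
| stab_pos: "valid_braid (n, w) \<Longrightarrow> markov_step (n, w) (Suc n, w @ [int n])"
| stab_neg: "valid_braid (n, w) \<Longrightarrow> markov_step (n, w) (Suc n, w @ [- int n])"

definition knot_eq :: "braid \<Rightarrow> braid \<Rightarrow> bool" where
  "knot_eq = (symclp markov_step)\<^sup>*\<^sup>*"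

text \<open>Mirror image (all crossings switched) and reversal (orientation reversed).\<close>
definition mirror :: "braid \<Rightarrow> braid" where
  "mirror b = (fst b, map uminus (snd b))"

definition reverse :: "braid \<Rightarrow> braid" where
  "reverse b = (fst b, rev (snd b))"

definition reversible :: "braid \<Rightarrow> bool" where
  "reversible K \<longleftrightarrow> knot_eq K (reverse K) \<and> \<not> knot_eq K (mirror K)
      \<and> \<not> knot_eq K (reverse (mirror K))"

definition negative_amphicheiral :: "braid \<Rightarrow> bool" where
  "negative_amphicheiral K \<longleftrightarrow> knot_eq K (reverse (mirror K)) \<and> \<not> knot_eq K (reverse K)
      \<and> \<not> knot_eq K (mirror K)"

definition positive_amphicheiral :: "braid \<Rightarrow> bool" where
  "positive_amphicheiral K \<longleftrightarrow> knot_eq K (mirror K) \<and> \<not> knot_eq K (reverse K)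
      \<and> \<not> knot_eq K (reverse (mirror K))"

definition fully_amphicheiral :: "braid \<Rightarrow> bool" where
  "fully_amphicheiral K \<longleftrightarrow> knot_eq K (reverse K) \<and> knot_eq K (mirror K)
      \<and> knot_eq K (reverse (mirror K))"

definition quandle :: "'a set \<Rightarrow> ('a \<Rightarrow> 'a \<Rightarrow> 'a) \<Rightarrow> bool" where
  "quandle X op \<longleftrightarrow> (\<forall>a\<in>X. \<forall>b\<in>X. op a b \<in> X)
     \<and> (\<forall>a\<in>X. op a a = a)
     \<and> (\<forall>b\<in>X. \<forall>c\<in>X. \<exists>!a. a \<in> X \<and> op a b = c)
     \<and> (\<forall>a\<in>X. \<forall>b\<in>X. \<forall>c\<in>X. op (op a b) c = op (op a c) (op b c))"

text \<open>
  Colorings of the closed braid diagram.  c k i is the colour of the arc passing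
  through position i at level k (0 <= k <= length w); letter k of w is the crossing
  between levels k and k+1.  Level length w is identified with level 0 (closure).
  At each crossing the over-arc keeps its colour y, and the under-arc colour
  changes from x to x*y when passing from the right to the left of the over-arc
  (right with respect to the orientation of the over-arc).
\<close>
definition colorings :: "'a set \<Rightarrow> ('a \<Rightarrow> 'a \<Rightarrow> 'a) \<Rightarrow> braid \<Rightarrow> (nat \<Rightarrow> nat \<Rightarrow> 'a) set" where
  "colorings X op b = {c. let n = fst b; w = snd b; L = length w in
     (\<forall>k\<le>L. \<forall>i\<in>{1..n}. c k i \<in> X)
     \<and> (\<forall>k i. (L < k \<or> i \<notin> {1..n}) \<longrightarrow> c k i = undefined)
     \<and> (\<forall>i. c L i = c 0 i)
     \<and> (\<forall>k<L. let a = w ! k; j = nat \<bar>a\<bar> in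
          (\<forall>i\<in>{1..n}. i \<noteq> j \<and> i \<noteq> j + 1 \<longrightarrow> c (Suc k) i = c k i)
        \<and> (a > 0 \<longrightarrow> c (Suc k) (j + 1) = c k j \<and> c k (j + 1) = op (c (Suc k) j) (c k j))
        \<and> (a < 0 \<longrightarrow> c (Suc k) j = c k (j + 1) \<and> c (Suc k) (j + 1) = op (c k j) (c k (j + 1))))}"

end

theory Submission
  imports Defs
begin

text \<open>
  A coloring of a closed braid is determined by the colours of its top level, and these
  must be a fixed point of the action of the braid word on level colorings: a negative
  crossing acts through the quandle operation, a positive one through its right inverse.
  The number of fixed points is unchanged by Markov moves (self-distributivity gives the
  braid relation, idempotency the stabilisation), so it is a knot invariant.  The word
  of \<open>rm(K)\<close> acts by the inverse of the action of the word of \<open>K\<close>, hence has the same fixed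
  points, so \<open>Col(rm(K)) = Col(K)\<close> for every knot; applied to \<open>r(K)\<close> this gives
  \<open>Col(m(K)) = Col(r(K))\<close>.  In each admitted symmetry type \<open>K = r(K)\<close> or \<open>K = m(K)\<close>,
  which links the two pairs.
\<close>

section \<open>Braid words and quandles\<close>

lemma eq_fun_upd2_iff:
  "i \<noteq> k \<Longrightarrow> f = g(i := u, k := v) \<longleftrightarrow> f = g(i := f i, k := f k) \<and> f i = u \<and> f k = v"
  by (auto simp: fun_eq_iff)

definition valid_letter :: "nat \<Rightarrow> int \<Rightarrow> bool" where
  "valid_letter n a \<longleftrightarrow> a \<noteq> 0 \<and> nat \<bar>a\<bar> < n"

lemma valid_braid_iff: "valid_braid (n, w) \<longleftrightarrow> 1 \<le> n \<and> (\<forall>a\<in>set w. valid_letter n a)"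
  unfolding valid_braid_def valid_letter_def by auto

lemma valid_letter_uminus [simp]: "valid_letter n (- a) \<longleftrightarrow> valid_letter n a"
  unfolding valid_letter_def by auto

lemma markov_step_valid: "markov_step A B \<Longrightarrow> valid_braid A \<and> valid_braid B"
  by (induction rule: markov_step.induct) (auto simp: valid_braid_def)

lemma valid_braid_reverse: "valid_braid (reverse K) \<longleftrightarrow> valid_braid K"
  unfolding valid_braid_def reverse_def by simp

lemma reverse_mirror_reverse: "reverse (mirror (reverse K)) = mirror K"
  unfolding reverse_def mirror_def by (simp add: rev_map)

locale quandle_set =
  fixes X :: "'a set" and op :: "'a \<Rightarrow> 'a \<Rightarrow> 'a"
  assumes quandle: "quandle X op"
begin

lemma op_closed: "a \<in> X \<Longrightarrow> b \<in> X \<Longrightarrow> op a b \<in> X"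
  using quandle unfolding quandle_def by blast

lemma op_idem: "a \<in> X \<Longrightarrow> op a a = a"
  using quandle unfolding quandle_def by blast

lemma op_right_solvable: "b \<in> X \<Longrightarrow> c \<in> X \<Longrightarrow> \<exists>!a. a \<in> X \<and> op a b = c"
  using quandle unfolding quandle_def by blast

lemma op_self_distrib:
  "a \<in> X \<Longrightarrow> b \<in> X \<Longrightarrow> c \<in> X \<Longrightarrow> op (op a b) c = op (op a c) (op b c)"
  using quandle unfolding quandle_def by blast

definition rdiv :: "'a \<Rightarrow> 'a \<Rightarrow> 'a" where
  "rdiv c b = (THE a. a \<in> X \<and> op a b = c)"

lemma rdiv_closed_op:
  assumes "b \<in> X" "c \<in> X" shows "rdiv c b \<in> X" "op (rdiv c b) b = c"
  using theI'[OF op_right_solvable[OF assms]] unfolding rdiv_def by blast+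

lemma rdiv_eqI: "a \<in> X \<Longrightarrow> b \<in> X \<Longrightarrow> op a b = c \<Longrightarrow> rdiv c b = a"
  unfolding rdiv_def using op_right_solvable[of b c] op_closed[of a b] by (blast intro: the1_equality)

lemma rdiv_idem: "a \<in> X \<Longrightarrow> rdiv a a = a"
  by (simp add: rdiv_eqI op_idem)

section \<open>Colorings as fixed points of the braid action\<close>

definition level_colorings :: "nat \<Rightarrow> (nat \<Rightarrow> 'a) set" where
  "level_colorings n = {x. (\<forall>i\<in>{1..n}. x i \<in> X) \<and> (\<forall>i. i \<notin> {1..n} \<longrightarrow> x i = undefined)}"

lemma level_colorings_in: "x \<in> level_colorings n \<Longrightarrow> 1 \<le> i \<Longrightarrow> i \<le> n \<Longrightarrow> x i \<in> X"
  unfolding level_colorings_def by auto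

lemma level_colorings_undefined: "x \<in> level_colorings n \<Longrightarrow> i \<notin> {1..n} \<Longrightarrow> x i = undefined"
  unfolding level_colorings_def by auto

text \<open>Level \<open>k + 1\<close> of a coloring as a function of level \<open>k\<close> across the crossing
  \<open>\<sigma>\<^sub>j\<close> (\<open>pos_crossing\<close>) or \<open>\<sigma>\<^sub>j\<^sup>-\<^sup>1\<close> (\<open>neg_crossing\<close>); at \<open>\<sigma>\<^sub>j\<close> the new under-arc colour
  is only given implicitly, whence the right division.\<close>

definition pos_crossing :: "nat \<Rightarrow> (nat \<Rightarrow> 'a) \<Rightarrow> nat \<Rightarrow> 'a" where
  "pos_crossing j x = x(j := rdiv (x (Suc j)) (x j), Suc j := x j)"

definition neg_crossing :: "nat \<Rightarrow> (nat \<Rightarrow> 'a) \<Rightarrow> nat \<Rightarrow> 'a" where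
  "neg_crossing j x = x(j := x (Suc j), Suc j := op (x j) (x (Suc j)))"

definition letter_action :: "int \<Rightarrow> (nat \<Rightarrow> 'a) \<Rightarrow> nat \<Rightarrow> 'a" where
  "letter_action a = (if a > 0 then pos_crossing (nat \<bar>a\<bar>) else neg_crossing (nat \<bar>a\<bar>))"

fun word_action :: "int list \<Rightarrow> (nat \<Rightarrow> 'a) \<Rightarrow> nat \<Rightarrow> 'a" where
  "word_action [] = id"
| "word_action (a # w) = word_action w \<circ> letter_action a"

lemma word_action_append: "word_action (u @ v) = word_action v \<circ> word_action u"
  by (induction u) auto

definition fixed_levels :: "nat \<Rightarrow> int list \<Rightarrow> (nat \<Rightarrow> 'a) set" where
  "fixed_levels n w = {x \<in> level_colorings n. word_action w x = x}"

lemma neg_crossing_level: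
  "x \<in> level_colorings n \<Longrightarrow> 1 \<le> j \<Longrightarrow> j < n \<Longrightarrow> neg_crossing j x \<in> level_colorings n"
  unfolding level_colorings_def neg_crossing_def by (auto intro!: op_closed)

lemma pos_crossing_level:
  "x \<in> level_colorings n \<Longrightarrow> 1 \<le> j \<Longrightarrow> j < n \<Longrightarrow> pos_crossing j x \<in> level_colorings n"
  unfolding level_colorings_def pos_crossing_def using rdiv_closed_op by auto

lemma neg_pos_crossing:
  "x \<in> level_colorings n \<Longrightarrow> 1 \<le> j \<Longrightarrow> j < n \<Longrightarrow> neg_crossing j (pos_crossing j x) = x"
  using level_colorings_in[of x n j] level_colorings_in[of x n "Suc j"] rdiv_closed_op[of "x j" "x (Suc j)"]
  unfolding neg_crossing_def pos_crossing_def by (auto simp: fun_eq_iff)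

lemma pos_neg_crossing:
  "x \<in> level_colorings n \<Longrightarrow> 1 \<le> j \<Longrightarrow> j < n \<Longrightarrow> pos_crossing j (neg_crossing j x) = x"
  using level_colorings_in[of x n j] level_colorings_in[of x n "Suc j"] rdiv_eqI[of "x j" "x (Suc j)"]
  unfolding neg_crossing_def pos_crossing_def by (auto simp: fun_eq_iff)

lemma letter_action_level:
  "valid_letter n a \<Longrightarrow> x \<in> level_colorings n \<Longrightarrow> letter_action a x \<in> level_colorings n"
  unfolding valid_letter_def letter_action_def using neg_crossing_level pos_crossing_level by auto

lemma letter_action_uminus_inverse:
  "valid_letter n a \<Longrightarrow> x \<in> level_colorings n \<Longrightarrow> letter_action (- a) (letter_action a x) = x"
  unfolding valid_letter_def letter_action_def using neg_pos_crossing pos_neg_crossing by auto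

lemma word_action_level:
  "\<forall>a\<in>set w. valid_letter n a \<Longrightarrow> x \<in> level_colorings n \<Longrightarrow> word_action w x \<in> level_colorings n"
  by (induction w arbitrary: x) (auto simp: letter_action_level)

lemma word_action_inverse:
  "\<forall>a\<in>set w. valid_letter n a \<Longrightarrow> x \<in> level_colorings n
    \<Longrightarrow> word_action (rev (map uminus w)) (word_action w x) = x"
  by (induction w arbitrary: x)
    (auto simp: word_action_append letter_action_level letter_action_uminus_inverse)

lemma fixed_levels_inverse_word:
  assumes "\<forall>a\<in>set w. valid_letter n a"
  shows "fixed_levels n (rev (map uminus w)) = fixed_levels n w"
proof -
  have "\<forall>a\<in>set (rev (map uminus w)). valid_letter n a" using assms by auto
  from word_action_inverse[OF this] word_action_inverse[OF assms] show ?thesis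
    unfolding fixed_levels_def by (auto simp: rev_map) metis+
qed

lemma crossing_iff:
  assumes "valid_letter n a" "x \<in> level_colorings n" "y \<in> level_colorings n"
  shows "(let j = nat \<bar>a\<bar> in
       (\<forall>i\<in>{1..n}. i \<noteq> j \<and> i \<noteq> j + 1 \<longrightarrow> y i = x i)
     \<and> (a > 0 \<longrightarrow> y (j + 1) = x j \<and> x (j + 1) = op (y j) (x j))
     \<and> (a < 0 \<longrightarrow> y j = x (j + 1) \<and> y (j + 1) = op (x j) (x (j + 1))))
     \<longleftrightarrow> y = letter_action a x"
proof -
  define j where "j = nat \<bar>a\<bar>"
  have j: "1 \<le> j" "j < n" "a \<noteq> 0" using assms(1) unfolding valid_letter_def j_def by auto
  have colours: "x j \<in> X" "x (j + 1) \<in> X" "y j \<in> X"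
    using level_colorings_in[OF assms(2)] level_colorings_in[OF assms(3)] j by auto
  have outside: "y i = x i" if "i \<notin> {1..n}" for i
    using that level_colorings_undefined[OF assms(2)] level_colorings_undefined[OF assms(3)] by simp
  have "y = x(j := y j, j + 1 := y (j + 1)) \<longleftrightarrow> (\<forall>i\<in>{1..n}. i \<noteq> j \<and> i \<noteq> j + 1 \<longrightarrow> y i = x i)"
    using outside by (auto simp: fun_eq_iff)
  then have updates_iff: "y = x(j := u, j + 1 := v) \<longleftrightarrow>
      (\<forall>i\<in>{1..n}. i \<noteq> j \<and> i \<noteq> j + 1 \<longrightarrow> y i = x i) \<and> y j = u \<and> y (j + 1) = v" for u v
    using eq_fun_upd2_iff[of j "j + 1" y x u v] by simp
  have solve: "x (j + 1) = op (y j) (x j) \<longleftrightarrow> y j = rdiv (x (j + 1)) (x j)"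
    using colours rdiv_closed_op[of "x j" "x (j + 1)"] rdiv_eqI[of "y j" "x j" "x (j + 1)"] by metis
  show ?thesis
  proof (cases "a > 0")
    case True
    then have action: "letter_action a x = x(j := rdiv (x (j + 1)) (x j), j + 1 := x j)"
      unfolding letter_action_def pos_crossing_def j_def by simp
    show ?thesis using True solve
      unfolding j_def[symmetric] Let_def action updates_iff by auto
  next
    case False
    then have action: "letter_action a x = x(j := x (j + 1), j + 1 := op (x j) (x (j + 1)))"
      unfolding letter_action_def neg_crossing_def j_def by simp
    show ?thesis using False j
      unfolding j_def[symmetric] Let_def action updates_iff by auto
  qed
qed

lemma colorings_iff:
  assumes "valid_braid (n, w)"
  shows "c \<in> colorings X op (n, w) \<longleftrightarrow>
      (\<forall>k\<le>length w. c k \<in> level_colorings n) \<and> (\<forall>k>length w. c k = (\<lambda>_. undefined))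
    \<and> c (length w) = c 0 \<and> (\<forall>k<length w. c (Suc k) = letter_action (w ! k) (c k))"
proof -
  let ?L = "length w"
  have levels: "(\<forall>k\<le>?L. \<forall>i\<in>{1..n}. c k i \<in> X) \<and> (\<forall>k i. (?L < k \<or> i \<notin> {1..n}) \<longrightarrow> c k i = undefined)
      \<longleftrightarrow> (\<forall>k\<le>?L. c k \<in> level_colorings n) \<and> (\<forall>k>?L. c k = (\<lambda>_. undefined))"
    unfolding level_colorings_def by (auto simp: fun_eq_iff) (metis not_le)+
  have crossings: "(\<forall>k<?L. let a = w ! k; j = nat \<bar>a\<bar> in
        (\<forall>i\<in>{1..n}. i \<noteq> j \<and> i \<noteq> j + 1 \<longrightarrow> c (Suc k) i = c k i)
      \<and> (a > 0 \<longrightarrow> c (Suc k) (j + 1) = c k j \<and> c k (j + 1) = op (c (Suc k) j) (c k j))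
      \<and> (a < 0 \<longrightarrow> c (Suc k) j = c k (j + 1) \<and> c (Suc k) (j + 1) = op (c k j) (c k (j + 1))))
      \<longleftrightarrow> (\<forall>k<?L. c (Suc k) = letter_action (w ! k) (c k))"
    if "\<forall>k\<le>?L. c k \<in> level_colorings n"
  proof -
    have "valid_letter n (w ! k)" if "k < ?L" for k
      using assms that unfolding valid_braid_iff by simp
    with crossing_iff that show ?thesis
      unfolding Let_def by (simp add: Suc_leI)
  qed
  have closure: "(\<forall>i. c ?L i = c 0 i) \<longleftrightarrow> c ?L = c 0"
    by (simp add: fun_eq_iff)
  show ?thesis
    unfolding colorings_def mem_Collect_eq fst_conv snd_conv Let_def[of n] Let_def[of w] Let_def[of ?L]
    using levels crossings closure by blast
qed

definition coloring_of :: "int list \<Rightarrow> (nat \<Rightarrow> 'a) \<Rightarrow> nat \<Rightarrow> nat \<Rightarrow> 'a" where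
  "coloring_of w x k = (if k \<le> length w then word_action (take k w) x else (\<lambda>_. undefined))"

lemma coloring_of_Suc:
  "k < length w \<Longrightarrow> coloring_of w x (Suc k) = letter_action (w ! k) (coloring_of w x k)"
  unfolding coloring_of_def by (simp add: take_Suc_conv_app_nth word_action_append)

lemma colorings_eq_image_fixed_levels:
  assumes "valid_braid (n, w)"
  shows "colorings X op (n, w) = coloring_of w ` fixed_levels n w"
proof
  show "colorings X op (n, w) \<subseteq> coloring_of w ` fixed_levels n w"
  proof
    fix c assume c: "c \<in> colorings X op (n, w)"
    have upto: "c k = coloring_of w (c 0) k" if "k \<le> length w" for k
      using that
    proof (induction k)
      case (Suc k)
      then show ?case using c colorings_iff[OF assms] by (simp add: coloring_of_Suc)
    qed (simp add: coloring_of_def)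
    moreover have "c k = coloring_of w (c 0) k" if "k > length w" for k
      using that c colorings_iff[OF assms] by (simp add: coloring_of_def)
    ultimately have "c = coloring_of w (c 0)"
      by (meson ext not_le)
    moreover have "c 0 \<in> level_colorings n" "c (length w) = c 0"
      using c colorings_iff[OF assms] by blast+
    moreover have "c (length w) = word_action w (c 0)"
      using upto[of "length w"] by (simp add: coloring_of_def)
    ultimately have "c 0 \<in> fixed_levels n w"
      unfolding fixed_levels_def by simp
    with \<open>c = coloring_of w (c 0)\<close> show "c \<in> coloring_of w ` fixed_levels n w" by blast
  qed
  show "coloring_of w ` fixed_levels n w \<subseteq> colorings X op (n, w)"
  proof
    fix c assume "c \<in> coloring_of w ` fixed_levels n w"
    then obtain x where x: "x \<in> level_colorings n" "word_action w x = x" and c: "c = coloring_of w x"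
      unfolding fixed_levels_def by blast
    have "\<forall>a\<in>set (take k w). valid_letter n a" for k
      using assms unfolding valid_braid_iff by (meson in_set_takeD)
    then have "\<forall>k\<le>length w. c k \<in> level_colorings n"
      unfolding c coloring_of_def using x(1) word_action_level by simp
    moreover have "\<forall>k>length w. c k = (\<lambda>_. undefined)" "c (length w) = c 0"
      unfolding c coloring_of_def using x(2) by simp_all
    ultimately show "c \<in> colorings X op (n, w)"
      unfolding colorings_iff[OF assms] by (simp add: c coloring_of_Suc)
  qed
qed

lemma colorings_eqpoll_fixed_levels:
  assumes "valid_braid (n, w)"
  shows "colorings X op (n, w) \<approx> fixed_levels n w"
proof -
  have "inj_on (coloring_of w) (fixed_levels n w)"
    by (rule inj_on_inverseI[where g = "\<lambda>c. c 0"]) (simp add: coloring_of_def)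
  then show ?thesis
    unfolding colorings_eq_image_fixed_levels[OF assms] by (rule inj_on_image_eqpoll_self)
qed

section \<open>Invariance under Markov moves\<close>

lemma fixed_levels_subword_cong:
  assumes "\<forall>y\<in>level_colorings n. word_action m y = word_action m' y"
    and "\<forall>a\<in>set u. valid_letter n a"
  shows "fixed_levels n (u @ m @ v) = fixed_levels n (u @ m' @ v)"
  using assms word_action_level[OF assms(2)] unfolding fixed_levels_def by (auto simp: word_action_append)

lemma pos_crossing_commute: "Suc j < k \<Longrightarrow> pos_crossing j (pos_crossing k y) = pos_crossing k (pos_crossing j y)"
  unfolding pos_crossing_def by (auto simp: fun_eq_iff)

lemma neg_crossing_braid:
  assumes "x j \<in> X" "x (Suc j) \<in> X" "x (Suc (Suc j)) \<in> X"
  shows "neg_crossing j (neg_crossing (Suc j) (neg_crossing j x))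
       = neg_crossing (Suc j) (neg_crossing j (neg_crossing (Suc j) x))"
  using op_self_distrib[OF assms] unfolding neg_crossing_def by (simp add: fun_eq_iff)

text \<open>Positive crossings invert negative ones, so the braid relation transfers from
  \<open>neg_crossing_braid\<close>.\<close>

lemma pos_crossing_braid:
  assumes "1 \<le> j" "Suc j < n" "y \<in> level_colorings n"
  shows "pos_crossing j (pos_crossing (Suc j) (pos_crossing j y))
       = pos_crossing (Suc j) (pos_crossing j (pos_crossing (Suc j) y))"
proof -
  define z where "z = pos_crossing j (pos_crossing (Suc j) (pos_crossing j y))"
  have l1: "pos_crossing j y \<in> level_colorings n" using pos_crossing_level assms by auto
  have l2: "pos_crossing (Suc j) (pos_crossing j y) \<in> level_colorings n"
    using pos_crossing_level[OF l1] assms by auto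
  have z: "z \<in> level_colorings n" unfolding z_def using pos_crossing_level[OF l2] assms by auto
  have "neg_crossing (Suc j) (neg_crossing j (neg_crossing (Suc j) z))
      = neg_crossing j (neg_crossing (Suc j) (neg_crossing j z))"
    by (rule neg_crossing_braid[symmetric]) (use level_colorings_in[OF z] assms in auto)
  also have "\<dots> = y"
    unfolding z_def using neg_pos_crossing[OF l2] neg_pos_crossing[OF l1] neg_pos_crossing[OF assms(3)] assms
    by auto
  finally have y: "neg_crossing (Suc j) (neg_crossing j (neg_crossing (Suc j) z)) = y" .
  have m1: "neg_crossing (Suc j) z \<in> level_colorings n" using neg_crossing_level[OF z] assms by auto
  have m2: "neg_crossing j (neg_crossing (Suc j) z) \<in> level_colorings n"
    using neg_crossing_level[OF m1] assms by auto
  have "pos_crossing (Suc j) (pos_crossing j (pos_crossing (Suc j) y)) = z"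
    unfolding y[symmetric] using pos_neg_crossing[OF m2] pos_neg_crossing[OF m1] pos_neg_crossing[OF z] assms
    by auto
  then show ?thesis unfolding z_def by simp
qed

lemma level_colorings_Suc_iff:
  "y \<in> level_colorings (Suc n) \<longleftrightarrow> (\<exists>x t. x \<in> level_colorings n \<and> t \<in> X \<and> y = x(Suc n := t))"
proof
  assume y: "y \<in> level_colorings (Suc n)"
  then have "y(Suc n := undefined) \<in> level_colorings n" "y (Suc n) \<in> X"
    unfolding level_colorings_def by auto
  then show "\<exists>x t. x \<in> level_colorings n \<and> t \<in> X \<and> y = x(Suc n := t)"
    by (metis fun_upd_triv fun_upd_upd)
qed (auto simp: level_colorings_def)

lemma pos_crossing_update: "Suc j < m \<Longrightarrow> pos_crossing j (x(m := t)) = (pos_crossing j x)(m := t)"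
  unfolding pos_crossing_def by (simp add: fun_upd_twist)

lemma neg_crossing_update: "Suc j < m \<Longrightarrow> neg_crossing j (x(m := t)) = (neg_crossing j x)(m := t)"
  unfolding neg_crossing_def by (simp add: fun_upd_twist)

lemma letter_action_update:
  "valid_letter n a \<Longrightarrow> n < m \<Longrightarrow> letter_action a (x(m := t)) = (letter_action a x)(m := t)"
  unfolding valid_letter_def letter_action_def
  using pos_crossing_update[of "nat \<bar>a\<bar>" m] neg_crossing_update[of "nat \<bar>a\<bar>" m] by auto

lemma word_action_update:
  "\<forall>a\<in>set w. valid_letter n a \<Longrightarrow> n < m \<Longrightarrow> word_action w (x(m := t)) = (word_action w x)(m := t)"
  by (induction w arbitrary: x) (auto simp: letter_action_update)

text \<open>The kink added by a stabilisation forces strands \<open>n\<close> and \<open>n + 1\<close> to carry the same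
  colour, and by idempotency every common colour is admissible.\<close>

lemma stabilising_letter_fixes_iff:
  assumes n: "1 \<le> n" and e: "e = int n \<or> e = - int n"
    and x: "x \<in> level_colorings n" and z: "z \<in> level_colorings n" and t: "t \<in> X"
  shows "letter_action e (z(Suc n := t)) = x(Suc n := t) \<longleftrightarrow> z = x \<and> t = x n"
proof -
  have zn: "z n \<in> X" "x n \<in> X" using level_colorings_in[OF z] level_colorings_in[OF x] n by auto
  have off: "z (Suc n) = x (Suc n)"
    using level_colorings_undefined[OF z] level_colorings_undefined[OF x] by simp
  have agree: "z = x \<longleftrightarrow> z n = x n \<and> (\<forall>i. i \<noteq> n \<and> i \<noteq> Suc n \<longrightarrow> z i = x i)"
    using off by (auto simp: fun_eq_iff)
  show ?thesis
  proof (cases "e = int n")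
    case True
    with n have action: "letter_action e (z(Suc n := t)) = z(n := rdiv t (z n), Suc n := z n)"
      unfolding letter_action_def pos_crossing_def by (auto simp: fun_eq_iff)
    show ?thesis
    proof
      assume fixed: "letter_action e (z(Suc n := t)) = x(Suc n := t)"
      have at: "(z(n := rdiv t (z n), Suc n := z n)) i = (x(Suc n := t)) i" for i
        using fixed unfolding action by simp
      from at[of "Suc n"] have "z n = t" by simp
      with at[of n] rdiv_idem[OF t] have "x n = t" by simp
      with \<open>z n = t\<close> at show "z = x \<and> t = x n"
        unfolding agree by (metis fun_upd_other)
    qed (use action rdiv_idem[OF zn(2)] in auto)
  next
    case False
    with e n have action: "letter_action e (z(Suc n := t)) = z(n := t, Suc n := op (z n) t)"
      unfolding letter_action_def neg_crossing_def by (auto simp: fun_eq_iff)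
    have cancel: "op (z n) t = t \<Longrightarrow> z n = t"
      using rdiv_eqI[OF zn(1) t] rdiv_eqI[OF t t op_idem[OF t]] by metis
    show ?thesis
    proof
      assume fixed: "letter_action e (z(Suc n := t)) = x(Suc n := t)"
      have at: "(z(n := t, Suc n := op (z n) t)) i = (x(Suc n := t)) i" for i
        using fixed unfolding action by simp
      from at[of "Suc n"] cancel have "z n = t" by simp
      moreover from at[of n] have "x n = t" by simp
      ultimately show "z = x \<and> t = x n"
        using at unfolding agree by (metis fun_upd_other)
    qed (use action op_idem[OF zn(2)] in auto)
  qed
qed

lemma fixed_levels_stabilise:
  assumes w: "valid_braid (n, w)" and e: "e = int n \<or> e = - int n"
  shows "fixed_levels (Suc n) (w @ [e]) = (\<lambda>x. x(Suc n := x n)) ` fixed_levels n w"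
proof -
  have n: "1 \<le> n" and letters: "\<forall>a\<in>set w. valid_letter n a" using w unfolding valid_braid_iff by auto
  have key: "x(Suc n := t) \<in> fixed_levels (Suc n) (w @ [e]) \<longleftrightarrow> x \<in> fixed_levels n w \<and> t = x n"
    if x: "x \<in> level_colorings n" and t: "t \<in> X" for x t
  proof -
    have "x(Suc n := t) \<in> level_colorings (Suc n)" using x t level_colorings_Suc_iff by blast
    moreover have "word_action (w @ [e]) (x(Suc n := t)) = letter_action e ((word_action w x)(Suc n := t))"
      using word_action_update[OF letters] by (simp add: word_action_append)
    ultimately show ?thesis
      using stabilising_letter_fixes_iff[OF n e x word_action_level[OF letters x] t] x
      unfolding fixed_levels_def by simp
  qed
  show ?thesis
  proof
    show "fixed_levels (Suc n) (w @ [e]) \<subseteq> (\<lambda>x. x(Suc n := x n)) ` fixed_levels n w"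
    proof
      fix y assume y: "y \<in> fixed_levels (Suc n) (w @ [e])"
      then obtain x t where "x \<in> level_colorings n" "t \<in> X" and y_def: "y = x(Suc n := t)"
        unfolding fixed_levels_def level_colorings_Suc_iff by blast
      with y key have "x \<in> fixed_levels n w" "t = x n" by blast+
      then show "y \<in> (\<lambda>x. x(Suc n := x n)) ` fixed_levels n w" using y_def by blast
    qed
    show "(\<lambda>x. x(Suc n := x n)) ` fixed_levels n w \<subseteq> fixed_levels (Suc n) (w @ [e])"
    proof
      fix y assume "y \<in> (\<lambda>x. x(Suc n := x n)) ` fixed_levels n w"
      then obtain x where x: "x \<in> fixed_levels n w" and y_def: "y = x(Suc n := x n)" by blast
      then have "x \<in> level_colorings n" "x n \<in> X"
        using n level_colorings_in unfolding fixed_levels_def by auto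
      with key x show "y \<in> fixed_levels (Suc n) (w @ [e])" unfolding y_def by blast
    qed
  qed
qed

lemma fixed_levels_stabilise_eqpoll:
  assumes "valid_braid (n, w)" "e = int n \<or> e = - int n"
  shows "fixed_levels n w \<approx> fixed_levels (Suc n) (w @ [e])"
proof -
  have "inj_on (\<lambda>x. x(Suc n := x n)) (fixed_levels n w)"
    by (rule inj_on_inverseI[where g = "\<lambda>y. y(Suc n := undefined)"])
      (auto simp: fixed_levels_def level_colorings_def fun_eq_iff)
  then show ?thesis
    unfolding fixed_levels_stabilise[OF assms] by (rule eqpoll_sym[OF inj_on_image_eqpoll_self])
qed

lemma fixed_levels_conjugate:
  assumes a: "valid_letter n a" and w: "\<forall>b\<in>set w. valid_letter n b"
  shows "fixed_levels n (w @ [a]) = letter_action a ` fixed_levels n (a # w)"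
proof
  show "fixed_levels n (w @ [a]) \<subseteq> letter_action a ` fixed_levels n (a # w)"
  proof
    fix y assume "y \<in> fixed_levels n (w @ [a])"
    then have y: "y \<in> level_colorings n" "letter_action a (word_action w y) = y"
      unfolding fixed_levels_def by (simp_all add: word_action_append)
    define x where "x = letter_action (- a) y"
    have x: "x \<in> level_colorings n" "letter_action a x = y"
      unfolding x_def using letter_action_level letter_action_uminus_inverse[of n "- a"] a y(1) by auto
    have "word_action (a # w) x = letter_action (- a) (letter_action a (word_action w y))"
      using x(2) letter_action_uminus_inverse[OF a word_action_level[OF w y(1)]] by simp
    also have "\<dots> = x" unfolding x_def y(2) ..
    finally show "y \<in> letter_action a ` fixed_levels n (a # w)"
      using x unfolding fixed_levels_def by force
  qed
  show "letter_action a ` fixed_levels n (a # w) \<subseteq> fixed_levels n (w @ [a])"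
    using letter_action_level[OF a] unfolding fixed_levels_def by (auto simp: word_action_append)
qed

lemma fixed_levels_conjugate_eqpoll:
  assumes "valid_letter n a" "\<forall>b\<in>set w. valid_letter n b"
  shows "fixed_levels n (a # w) \<approx> fixed_levels n (w @ [a])"
proof -
  have "inj_on (letter_action a) (fixed_levels n (a # w))"
    by (rule inj_on_inverseI[where g = "letter_action (- a)"])
      (use letter_action_uminus_inverse[OF assms(1)] in \<open>auto simp: fixed_levels_def\<close>)
  then show ?thesis
    unfolding fixed_levels_conjugate[OF assms] by (rule eqpoll_sym[OF inj_on_image_eqpoll_self])
qed

lemma word_action_far_commute:
  assumes "a > 0" "b > 0" "\<bar>a - b\<bar> \<ge> 2"
  shows "word_action [a, b] = word_action [b, a]"
proof -
  have "Suc (nat a) < nat b \<or> Suc (nat b) < nat a" using assms by auto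
  then have "pos_crossing (nat b) (pos_crossing (nat a) y) = pos_crossing (nat a) (pos_crossing (nat b) y)"
    for y by (metis pos_crossing_commute)
  with assms show ?thesis by (simp add: letter_action_def fun_eq_iff)
qed

lemma word_action_braid_relation:
  assumes "valid_letter n a" "valid_letter n b" "a > 0" "b > 0" "\<bar>a - b\<bar> = 1"
    and y: "y \<in> level_colorings n"
  shows "word_action [a, b, a] y = word_action [b, a, b] y"
proof -
  have bounds: "1 \<le> nat a" "nat a < n" "1 \<le> nat b" "nat b < n"
    using assms unfolding valid_letter_def by auto
  have "pos_crossing (nat a) (pos_crossing (nat b) (pos_crossing (nat a) y))
      = pos_crossing (nat b) (pos_crossing (nat a) (pos_crossing (nat b) y))"
  proof (cases "nat b = Suc (nat a)")
    case True
    then show ?thesis using pos_crossing_braid[OF _ _ y, of "nat a"] bounds by simp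
  next
    case False
    then have "nat a = Suc (nat b)" using assms(3-5) by auto
    then show ?thesis using pos_crossing_braid[OF _ _ y, of "nat b"] bounds by simp
  qed
  with assms(3,4) show ?thesis by (simp add: letter_action_def)
qed

lemma fixed_levels_eqpoll_if_markov_step:
  "markov_step A B \<Longrightarrow> fixed_levels (fst A) (snd A) \<approx> fixed_levels (fst B) (snd B)"
proof (induction rule: markov_step.induct)
  case (free_cancel n u a v)
  then have "\<forall>c\<in>set (u @ [a, -a] @ v). valid_letter n c" by (simp add: valid_braid_iff)
  then have "fixed_levels n (u @ [a, -a] @ v) = fixed_levels n (u @ [] @ v)"
    by (intro fixed_levels_subword_cong) (auto simp: letter_action_uminus_inverse)
  then show ?case by simp
next
  case (far_comm n u a b v)
  then have "fixed_levels n (u @ [a, b] @ v) = fixed_levels n (u @ [b, a] @ v)"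
    using word_action_far_commute[OF far_comm(2-4)]
    by (intro fixed_levels_subword_cong) (simp_all add: valid_braid_iff)
  then show ?case by simp
next
  case (braid_rel n u a b v)
  then have "fixed_levels n (u @ [a, b, a] @ v) = fixed_levels n (u @ [b, a, b] @ v)"
    using word_action_braid_relation[of n a b] unfolding valid_braid_iff
    by (intro fixed_levels_subword_cong) simp_all
  then show ?case by simp
next
  case (conj n a w)
  then show ?case using fixed_levels_conjugate_eqpoll unfolding valid_braid_iff by simp
next
  case (stab_pos n w)
  then show ?case using fixed_levels_stabilise_eqpoll by simp
next
  case (stab_neg n w)
  then show ?case using fixed_levels_stabilise_eqpoll by simp
qed

lemma colorings_eqpoll_if_markov_step:
  assumes "markov_step A B" shows "colorings X op A \<approx> colorings X op B"
proof -
  obtain n w m v where A: "A = (n, w)" and B: "B = (m, v)" by fastforce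
  have "colorings X op A \<approx> fixed_levels n w"
    using markov_step_valid[OF assms] unfolding A by (simp add: colorings_eqpoll_fixed_levels)
  also have "\<dots> \<approx> fixed_levels m v"
    using fixed_levels_eqpoll_if_markov_step[OF assms] unfolding A B by simp
  also have "\<dots> \<approx> colorings X op B"
    using markov_step_valid[OF assms] unfolding B by (simp add: colorings_eqpoll_fixed_levels eqpoll_sym)
  finally show ?thesis .
qed

lemma colorings_eqpoll_if_knot_eq:
  "knot_eq A B \<Longrightarrow> colorings X op A \<approx> colorings X op B"
  unfolding knot_eq_def
proof (induction rule: rtranclp_induct)
  case (step B C)
  from step.hyps(2) have "markov_step B C \<or> markov_step C B" by (simp add: symclp_def)
  then have "colorings X op B \<approx> colorings X op C"
    using colorings_eqpoll_if_markov_step eqpoll_sym by blast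
  with step.IH show ?case by (rule eqpoll_trans)
qed simp

lemma colorings_reverse_mirror_eqpoll:
  assumes "valid_braid K" shows "colorings X op (reverse (mirror K)) \<approx> colorings X op K"
proof -
  obtain n w where K: "K = (n, w)" by fastforce
  have "valid_braid (n, rev (map uminus w))" using assms unfolding K valid_braid_def by auto
  then have "colorings X op (reverse (mirror K)) \<approx> fixed_levels n (rev (map uminus w))"
    unfolding K reverse_def mirror_def by (simp add: colorings_eqpoll_fixed_levels)
  also have "\<dots> = fixed_levels n w"
    using assms unfolding K valid_braid_iff by (simp add: fixed_levels_inverse_word)
  also have "\<dots> \<approx> colorings X op K"
    using assms unfolding K by (simp add: colorings_eqpoll_fixed_levels eqpoll_sym)
  finally show ?thesis .
qed

end

theorem corollary3p3:
  fixes X :: "'a set" and op :: "'a \<Rightarrow> 'a \<Rightarrow> 'a" and K :: braid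
  assumes "quandle X op"
    and "is_knot_braid K"
    and "reversible K \<or> positive_amphicheiral K \<or> fully_amphicheiral K"
  shows "colorings X op (reverse (mirror K)) \<approx> colorings X op (mirror K)
       \<and> colorings X op (mirror K) \<approx> colorings X op (reverse K)
       \<and> colorings X op (reverse K) \<approx> colorings X op K"
proof -
  interpret quandle_set X op by (rule quandle_set.intro) fact
  have valid: "valid_braid K" using assms(2) unfolding is_knot_braid_def by simp
  have rm: "colorings X op (reverse (mirror K)) \<approx> colorings X op K"
    using colorings_reverse_mirror_eqpoll[OF valid] .
  have mr: "colorings X op (mirror K) \<approx> colorings X op (reverse K)"
    using colorings_reverse_mirror_eqpoll[of "reverse K"] valid
    by (simp add: valid_braid_reverse reverse_mirror_reverse)
  have "knot_eq K (reverse K) \<or> knot_eq K (mirror K)"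
    using assms(3) unfolding reversible_def positive_amphicheiral_def fully_amphicheiral_def by blast
  then have r: "colorings X op (reverse K) \<approx> colorings X op K"
    using colorings_eqpoll_if_knot_eq eqpoll_sym eqpoll_trans[OF eqpoll_sym[OF mr]] by blast
  have "colorings X op (reverse (mirror K)) \<approx> colorings X op (mirror K)"
    using eqpoll_trans[OF rm eqpoll_sym[OF eqpoll_trans[OF mr r]]] .
  with mr r show ?thesis by blast
qed

end
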